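(* Let $N\ge 1$, let $\mathbf{a}_1,\dots,\mathbf{a}_N\in\mathbb{R}^3$ (base station positions, $\mathbf{a}_i=(a_i,b_i,c_i)$) and $\mathbf{x}_G\in\mathbb{R}^3$, and set $d_i=\|\mathbf{x}_G-\mathbf{a}_i\|$. Define $$F_2(\mathbf{x})=\frac14\sum_{i=1}^N\bigl(\|\mathbf{x}-\mathbf{a}_i\|^2-d_i^2\bigr)^2,\qquad F_{L2}(\mathbf{x},\lambda)=\frac14\sum_{i=1}^N\bigl(\|\mathbf{x}-\mathbf{a}_i\|^2+\lambda^2-d_i^2\bigr)^2$$ for $\mathbf{x}\in\mathbb{R}^3$, $\lambda\in\mathbb{R}$. Assume $\mathbf{x}_G$ is the unique global minimizer of $F_2$, and let $\mathbf{x}_L\ne\mathbf{x}_G$ be a local minimizer of $F_2$ at which $\nabla F_2(\mathbf{x}_L)=0$ and the second partial derivatives $\partial^2F_2/\partial x^2,\ \partial^2F_2/\partial y^2,\ \partial^2F_2/\partial z^2$ are positive. Then $(\mathbf{x}_L,0)$ is a saddle point of $F_{L2}$: namely $\nabla_{\mathbf{x}}F_{L2}(\mathbf{x}_L,0)=0$, $\frac{\partial F_{L2}}{\partial\lambda}(\mathbf{x}_L,0)=0$, $\frac{\partial^2F_{L2}}{\partial x\,\partial\lambda}(\mathbf{x}_L,0)=\frac{\partial^2F_{L2}}{\partial y\,\partial\lambda}(\mathbf{x}_L,0)=\frac{\partial^2F_{L2}}{\partial z\,\partial\lambda}(\mathbf{x}_L,0)=0$, the second derivatives of $F_{L2}$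 in $x,y,z$ at $(\mathbf{x}_L,0)$ are positive, and $\frac{\partial^2F_{L2}}{\partial\lambda^2}(\mathbf{x}_L,0)<0$.
   Context: This models Time of Arrival localization with exact distance measurements $d_i$ from known base stations $\mathbf{a}_i$ to an object at $\mathbf{x}_G$; $F_{L2}$ is the objective $F_2$ augmented by an additional variable $\lambda$. Note $F_{L2}(\mathbf{x},0)=F_2(\mathbf{x})$ and $F_2(\mathbf{x}_G)=0$. *)

theory Defs
  imports "HOL-Analysis.Analysis"
begin

definition F2 :: "nat \<Rightarrow> (nat \<Rightarrow> real^3) \<Rightarrow> real^3 \<Rightarrow> real^3 \<Rightarrow> real" where
  "F2 N a xG x = (1/4) * (\<Sum>i<N. ((norm (x - a i))\<^sup>2 - (norm (xG - a i))\<^sup>2)\<^sup>2)"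

definition FL2 :: "nat \<Rightarrow> (nat \<Rightarrow> real^3) \<Rightarrow> real^3 \<Rightarrow> real^3 \<Rightarrow> real \<Rightarrow> real" where
  "FL2 N a xG x lam = (1/4) * (\<Sum>i<N. ((norm (x - a i))\<^sup>2 + lam\<^sup>2 - (norm (xG - a i))\<^sup>2)\<^sup>2)"

definition pd :: "3 \<Rightarrow> (real^3 \<Rightarrow> real) \<Rightarrow> real^3 \<Rightarrow> real" where
  "pd k f p = deriv (\<lambda>t. f (p + t *\<^sub>R axis k 1)) 0"

definition pdx :: "3 \<Rightarrow> (real^3 \<Rightarrow> real \<Rightarrow> real) \<Rightarrow> real^3 \<Rightarrow> real \<Rightarrow> real" where
  "pdx k g p l = deriv (\<lambda>t. g (p + t *\<^sub>R axis k 1) l) 0"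

definition pdl :: "(real^3 \<Rightarrow> real \<Rightarrow> real) \<Rightarrow> real^3 \<Rightarrow> real \<Rightarrow> real" where
  "pdl g p l = deriv (\<lambda>t. g p (l + t)) 0"

definition local_minimizer :: "(real^3 \<Rightarrow> real) \<Rightarrow> real^3 \<Rightarrow> bool" where
  "local_minimizer f p \<longleftrightarrow> (\<exists>e>0. \<forall>x\<in>ball p e. f p \<le> f x)"

end

theory Submission
  imports Defs
begin

text \<open>Write \<open>r\<^sub>i = \<parallel>x\<^sub>L - a\<^sub>i\<parallel>\<^sup>2 - d\<^sub>i\<^sup>2\<close>. The \<open>x\<close>-derivatives of \<open>F\<^sub>L\<^sub>2\<close> at \<open>\<lambda> = 0\<close> are those of
  \<open>F\<^sub>2\<close>, the mixed derivatives vanish because \<open>\<lambda>\<close> enters only through \<open>\<lambda>\<^sup>2\<close>, and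
  \<open>\<partial>\<^sup>2F\<^sub>L\<^sub>2/\<partial>\<lambda>\<^sup>2 (x\<^sub>L, 0) = \<Sum> r\<^sub>i\<close>. Stationarity of \<open>F\<^sub>2\<close> at \<open>x\<^sub>L\<close> says \<open>\<Sum> r\<^sub>i (x\<^sub>L - a\<^sub>i) = 0\<close>;
  pairing with \<open>u = x\<^sub>L - x\<^sub>G\<close> and using \<open>2\<langle>x\<^sub>L - a\<^sub>i, u\<rangle> = r\<^sub>i + \<parallel>u\<parallel>\<^sup>2\<close> gives
  \<open>\<Sum> r\<^sub>i\<^sup>2 + \<parallel>u\<parallel>\<^sup>2 \<Sum> r\<^sub>i = 0\<close>. Since \<open>x\<^sub>G\<close> is the unique minimiser, \<open>\<Sum> r\<^sub>i\<^sup>2 = 4 F\<^sub>2(x\<^sub>L) > 0\<close>,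
  hence \<open>\<Sum> r\<^sub>i < 0\<close>.\<close>

lemma norm_add_axis_sq:
  fixes w :: "real^'n"
  shows "(norm (w + t *\<^sub>R axis k 1))\<^sup>2 = (norm w)\<^sup>2 + 2 * t * w $ k + t\<^sup>2"
proof -
  have "inner (w + t *\<^sub>R axis k 1) (w + t *\<^sub>R axis k 1) = inner w w + 2 * t * w $ k + t\<^sup>2"
    by (simp add: inner_add_left inner_add_right inner_axis inner_axis_axis inner_commute
        power2_eq_square algebra_simps)
  then show ?thesis by (simp add: power2_norm_eq_inner)
qed

lemma inner_diff_polarize:
  fixes x y q :: "'a::real_inner"
  shows "2 * inner (x - q) (x - y) = ((norm (x - q))\<^sup>2 - (norm (y - q))\<^sup>2) + (norm (x - y))\<^sup>2"
proof -
  have "x - q = (x - y) + (y - q)" by simp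
  then show ?thesis
    by (simp only: power2_norm_eq_inner inner_add_left inner_add_right inner_commute)
      (simp add: algebra_simps inner_commute)
qed

lemma sum_residuals_neg_of_stationary:
  fixes x y :: "'a::real_inner" and a :: "'i \<Rightarrow> 'a"
  defines "r i \<equiv> (norm (x - a i))\<^sup>2 - (norm (y - a i))\<^sup>2"
  assumes stationary: "(\<Sum>i\<in>I. r i *\<^sub>R (x - a i)) = 0"
    and pos: "(\<Sum>i\<in>I. (r i)\<^sup>2) > 0" and "x \<noteq> y"
  shows "(\<Sum>i\<in>I. r i) < 0"
proof -
  have "0 = inner (\<Sum>i\<in>I. r i *\<^sub>R (x - a i)) (x - y)" by (simp add: stationary)
  also have "\<dots> = (\<Sum>i\<in>I. r i * ((r i + (norm (x - y))\<^sup>2) / 2))"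
    unfolding inner_sum_left
    by (rule sum.cong) (simp_all add: r_def inner_diff_polarize[of x "a _" y, symmetric])
  also have "\<dots> = (\<Sum>i\<in>I. (r i)\<^sup>2 + (norm (x - y))\<^sup>2 * r i) / 2"
    by (simp add: sum_divide_distrib power2_eq_square algebra_simps)
  also have "\<dots> = ((\<Sum>i\<in>I. (r i)\<^sup>2) + (norm (x - y))\<^sup>2 * (\<Sum>i\<in>I. r i)) / 2"
    by (simp add: sum.distrib sum_distrib_left)
  finally have "(norm (x - y))\<^sup>2 * (\<Sum>i\<in>I. r i) < 0" using pos by simp
  then show ?thesis by (simp add: mult_less_0_iff)
qed

lemma FL2_at_zero: "FL2 N a xG x 0 = F2 N a xG x"
  by (simp add: FL2_def F2_def)

lemma pdx_FL2_at_zero: "pdx k (FL2 N a xG) p 0 = pd k (F2 N a xG) p"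
  by (simp add: pdx_def pd_def FL2_at_zero)

lemma pdx_pdx_FL2_at_zero: "pdx k (pdx k (FL2 N a xG)) p 0 = pd k (pd k (F2 N a xG)) p"
  by (simp add: pdx_def[of k "pdx k (FL2 N a xG)"] pd_def[of k "pd k (F2 N a xG)"] pdx_FL2_at_zero)

lemma pdx_FL2:
  "pdx k (FL2 N a xG) p l =
     (\<Sum>i<N. ((norm (p - a i))\<^sup>2 + l\<^sup>2 - (norm (xG - a i))\<^sup>2) * (p - a i) $ k)"
proof -
  define c where "c i = (norm (p - a i))\<^sup>2 + l\<^sup>2 - (norm (xG - a i))\<^sup>2" for i
  have shift: "(norm (p + t *\<^sub>R axis k 1 - a i))\<^sup>2
      = (norm (p - a i))\<^sup>2 + 2 * t * (p - a i) $ k + t\<^sup>2" for i t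
    using norm_add_axis_sq[of "p - a i" t k] by (simp add: diff_add_eq)
  have "(\<lambda>t. FL2 N a xG (p + t *\<^sub>R axis k 1) l)
      = (\<lambda>t. (1/4) * (\<Sum>i<N. (c i + 2 * t * (p - a i) $ k + t\<^sup>2)\<^sup>2))"
    by (simp only: FL2_def shift c_def) (simp add: algebra_simps)
  moreover have "((\<lambda>t. (1/4) * (\<Sum>i<N. (c i + 2 * t * (p - a i) $ k + t\<^sup>2)\<^sup>2))
      has_real_derivative (\<Sum>i<N. c i * (p - a i) $ k)) (at 0)"
    by (auto intro!: derivative_eq_intros sum.cong simp: sum_distrib_left field_simps)
  ultimately show ?thesis by (simp add: pdx_def c_def DERIV_imp_deriv)
qed

lemma pdl_FL2:
  "pdl (FL2 N a xG) p l = l * (\<Sum>i<N. (norm (p - a i))\<^sup>2 + l\<^sup>2 - (norm (xG - a i))\<^sup>2)"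
proof -
  define c where "c i = (norm (p - a i))\<^sup>2 - (norm (xG - a i))\<^sup>2" for i
  have "(\<lambda>t. FL2 N a xG p (l + t)) = (\<lambda>t. (1/4) * (\<Sum>i<N. (c i + (l + t)\<^sup>2)\<^sup>2))"
    by (simp add: FL2_def c_def algebra_simps)
  moreover have "((\<lambda>t. (1/4) * (\<Sum>i<N. (c i + (l + t)\<^sup>2)\<^sup>2))
      has_real_derivative l * (\<Sum>i<N. c i + l\<^sup>2)) (at 0)"
    by (auto intro!: derivative_eq_intros sum.cong simp: sum_distrib_left algebra_simps)
  ultimately show ?thesis by (simp add: pdl_def c_def DERIV_imp_deriv algebra_simps)
qed

lemma pdl_pdx_FL2: "pdl (pdx k (FL2 N a xG)) p l = 2 * l * (\<Sum>i<N. (p - a i) $ k)"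
proof -
  have "((\<lambda>t. \<Sum>i<N. ((norm (p - a i))\<^sup>2 + (l + t)\<^sup>2 - (norm (xG - a i))\<^sup>2) * (p - a i) $ k)
      has_real_derivative 2 * l * (\<Sum>i<N. (p - a i) $ k)) (at 0)"
    by (auto intro!: derivative_eq_intros simp: sum_distrib_left algebra_simps)
  then show ?thesis by (simp add: pdl_def pdx_FL2 DERIV_imp_deriv)
qed

lemma pdl_pdl_FL2:
  "pdl (pdl (FL2 N a xG)) p l = (\<Sum>i<N. (norm (p - a i))\<^sup>2 + 3 * l\<^sup>2 - (norm (xG - a i))\<^sup>2)"
proof -
  have "((\<lambda>t. (l + t) * (\<Sum>i<N. (norm (p - a i))\<^sup>2 + (l + t)\<^sup>2 - (norm (xG - a i))\<^sup>2))
      has_real_derivative (\<Sum>i<N. (norm (p - a i))\<^sup>2 + 3 * l\<^sup>2 - (norm (xG - a i))\<^sup>2)) (at 0)"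
    by (auto intro!: derivative_eq_intros simp: sum_distrib_left sum.distrib algebra_simps
        power2_eq_square)
  then show ?thesis by (simp add: pdl_def[of "pdl (FL2 N a xG)"] pdl_FL2 DERIV_imp_deriv)
qed

theorem mainTheorem1:
  fixes N :: nat and a :: "nat \<Rightarrow> real^3" and xG xL :: "real^3"
  assumes "N \<ge> 1"
    and uniq: "\<forall>x. x \<noteq> xG \<longrightarrow> F2 N a xG xG < F2 N a xG x"
    and "xL \<noteq> xG"
    and "local_minimizer (F2 N a xG) xL"
    and "\<forall>k. pd k (F2 N a xG) xL = 0"
    and "\<forall>k. pd k (pd k (F2 N a xG)) xL > 0"
  shows "(\<forall>k. pdx k (FL2 N a xG) xL 0 = 0)
    \<and> pdl (FL2 N a xG) xL 0 = 0
    \<and> (\<forall>k. pdl (pdx k (FL2 N a xG)) xL 0 = 0)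
    \<and> (\<forall>k. pdx k (pdx k (FL2 N a xG)) xL 0 > 0)
    \<and> pdl (pdl (FL2 N a xG)) xL 0 < 0"
proof -
  define r where "r i = (norm (xL - a i))\<^sup>2 - (norm (xG - a i))\<^sup>2" for i
  have grad: "\<forall>k. pdx k (FL2 N a xG) xL 0 = 0"
    using assms(5) by (simp add: pdx_FL2_at_zero)
  then have "(\<Sum>i<N. r i *\<^sub>R (xL - a i)) = 0"
    by (simp add: vec_eq_iff pdx_FL2 r_def)
  moreover have "(\<Sum>i<N. (r i)\<^sup>2) > 0"
    using uniq \<open>xL \<noteq> xG\<close> by (fastforce simp: F2_def r_def)
  ultimately have "(\<Sum>i<N. r i) < 0"
    using \<open>xL \<noteq> xG\<close> unfolding r_def by (rule sum_residuals_neg_of_stationary)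
  then show ?thesis
    using grad assms(6) by (simp add: pdl_FL2 pdl_pdx_FL2 pdx_pdx_FL2_at_zero pdl_pdl_FL2 r_def)
qed

end
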